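(* Let $H$ be a digraph (possibly with loops) and let $D$ be an $H$-colored tournament. Then for every $k \geq 3$, $D$ has a $(k,H)$-kernel.
   Context: All digraphs are finite. A tournament is a digraph in which every two distinct vertices are joined by exactly one arc (no loops, no symmetric arcs). $D$ comes with a map $\rho: A(D)\to V(H)$. For a walk $W=(x_0,\ldots,x_n)$ in $D$, there is an obstruction on $x_i$ if $(\rho(x_{i-1},x_i),\rho(x_i,x_{i+1})) \notin A(H)$; for an open walk this is considered at internal vertices $x_i$, $1\le i\le n-1$, for a closed walk at all $i\in\{0,\ldots,n-1\}$ with indices modulo $n$. $O_H(W)$ is the set of indices with an obstruction; the $H$-length is $l_H(W)=|O_H(W)|+1$ for open $W$ and $|O_H(W)|$ for closed $W$. A $(k,H)$-kernel ($k\ge2$) is a set $S\subseteq V(D)$ such that for every two distinct $u,v\in S$ every directed $uv$-path in $D$ has $H$-length at least $k$, and for every $x\in V(D)\setminus S$ there is a directed path from $x$ to a vertex of $S$ of $H$-length at most $k-1$. *)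

theory Defs
  imports Main
begin

definition digraph :: "'a set \<Rightarrow> ('a \<times> 'a) set \<Rightarrow> bool" where
  "digraph V A \<longleftrightarrow> finite V \<and> A \<subseteq> V \<times> V"

definition tournament :: "'a set \<Rightarrow> ('a \<times> 'a) set \<Rightarrow> bool" where
  "tournament V A \<longleftrightarrow> digraph V A \<and> (\<forall>v. (v, v) \<notin> A) \<and>
     (\<forall>u\<in>V. \<forall>v\<in>V. u \<noteq> v \<longrightarrow> ((u, v) \<in> A \<longleftrightarrow> (v, u) \<notin> A))"

definition H_coloring :: "('a \<times> 'a) set \<Rightarrow> 'b set \<Rightarrow> ('a \<times> 'a \<Rightarrow> 'b) \<Rightarrow> bool" where
  "H_coloring AD VH \<rho> \<longleftrightarrow> (\<forall>e\<in>AD. \<rho> e \<in> VH)"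

definition dpath :: "'a set \<Rightarrow> ('a \<times> 'a) set \<Rightarrow> 'a list \<Rightarrow> bool" where
  "dpath V A xs \<longleftrightarrow> xs \<noteq> [] \<and> distinct xs \<and> set xs \<subseteq> V \<and>
     (\<forall>i. Suc i < length xs \<longrightarrow> (xs ! i, xs ! Suc i) \<in> A)"

definition obstructions :: "('b \<times> 'b) set \<Rightarrow> ('a \<times> 'a \<Rightarrow> 'b) \<Rightarrow> 'a list \<Rightarrow> nat set" where
  "obstructions AH \<rho> xs = {i. 1 \<le> i \<and> Suc i < length xs \<and>
      (\<rho> (xs ! (i - 1), xs ! i), \<rho> (xs ! i, xs ! Suc i)) \<notin> AH}"

definition H_length :: "('b \<times> 'b) set \<Rightarrow> ('a \<times> 'a \<Rightarrow> 'b) \<Rightarrow> 'a list \<Rightarrow> nat" where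
  "H_length AH \<rho> xs = card (obstructions AH \<rho> xs) + 1"

definition kH_kernel :: "nat \<Rightarrow> 'a set \<Rightarrow> ('a \<times> 'a) set \<Rightarrow> ('b \<times> 'b) set \<Rightarrow>
    ('a \<times> 'a \<Rightarrow> 'b) \<Rightarrow> 'a set \<Rightarrow> bool" where
  "kH_kernel k V A AH \<rho> S \<longleftrightarrow> S \<subseteq> V \<and>
     (\<forall>u\<in>S. \<forall>v\<in>S. u \<noteq> v \<longrightarrow>
        (\<forall>xs. dpath V A xs \<and> hd xs = u \<and> last xs = v \<longrightarrow> H_length AH \<rho> xs \<ge> k)) \<and>
     (\<forall>x\<in>V - S. \<exists>xs. dpath V A xs \<and> hd xs = x \<and> last xs \<in> S \<and> H_length AH \<rho> xs \<le> k - 1)"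

end

theory Submission
  imports Defs
begin

text \<open>A vertex of maximum in-degree in a tournament is a king: every other vertex reaches it
  by a directed path with at most two arcs. Such a path has at most one internal vertex, hence
  H-length at most 2, whatever \<open>H\<close> and the colouring are. So for \<open>k \<ge> 3\<close> the singleton of a
  king is a \<open>(k,H)\<close>-kernel, the independence condition being vacuous for a singleton.\<close>

lemma H_length_less_length:
  assumes "2 \<le> length xs"
  shows "H_length AH \<rho> xs < length xs"
proof -
  have "obstructions AH \<rho> xs \<subseteq> {1..<length xs - 1}"
    unfolding obstructions_def by auto
  then have "card (obstructions AH \<rho> xs) \<le> card {1..<length xs - 1}"
    by (rule card_mono[rotated]) simp
  with assms show ?thesis
    unfolding H_length_def by simp
qed

definition in_degree :: "('a \<times> 'a) set \<Rightarrow> 'a \<Rightarrow> nat" where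
  "in_degree A v = card {w. (w, v) \<in> A}"

definition king :: "'a set \<Rightarrow> ('a \<times> 'a) set \<Rightarrow> 'a \<Rightarrow> bool" where
  "king V A v \<longleftrightarrow> v \<in> V \<and>
     (\<forall>x \<in> V - {v}. (x, v) \<in> A \<or> (\<exists>w. (x, w) \<in> A \<and> (w, v) \<in> A))"

lemma finite_in_neighbours:
  assumes "digraph V A"
  shows "finite {w. (w, u) \<in> A}"
proof -
  have "finite A"
    using assms finite_subset unfolding digraph_def by blast
  then have "finite (Domain A)"
    by (rule finite_Domain)
  then show ?thesis
    by (rule finite_subset[rotated]) blast
qed

lemma tournament_in_neighbours_subset:
  assumes T: "tournament V A" and "x \<in> V" "v \<in> V" "x \<noteq> v"
    and no_arc: "(x, v) \<notin> A" and no_detour: "\<And>w. (w, v) \<in> A \<Longrightarrow> (x, w) \<notin> A"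
  shows "insert v {w. (w, v) \<in> A} \<subseteq> {w. (w, x) \<in> A}"
proof
  have sub: "A \<subseteq> V \<times> V"
    using T unfolding tournament_def digraph_def by blast
  have one_arc: "\<And>u w. u \<in> V \<Longrightarrow> w \<in> V \<Longrightarrow> u \<noteq> w \<Longrightarrow> (u, w) \<in> A \<longleftrightarrow> (w, u) \<notin> A"
    using T unfolding tournament_def by blast
  fix w assume w: "w \<in> insert v {w. (w, v) \<in> A}"
  show "w \<in> {w. (w, x) \<in> A}"
  proof (cases "w = v")
    case True
    then show ?thesis
      using one_arc[of x v] no_arc assms(2-4) by blast
  next
    case False
    then have "(w, v) \<in> A" and "(x, w) \<notin> A"
      using w no_detour by auto
    moreover from this have "w \<in> V" and "w \<noteq> x"
      using sub no_arc by auto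
    ultimately show ?thesis
      using one_arc[of x w] assms(2) by blast
  qed
qed

lemma tournament_max_in_degree_is_king:
  assumes T: "tournament V A"
    and v: "v \<in> V" and max: "\<And>y. y \<in> V \<Longrightarrow> in_degree A y \<le> in_degree A v"
  shows "king V A v"
  unfolding king_def
proof (intro conjI v ballI)
  fix x assume x: "x \<in> V - {v}"
  have D: "digraph V A" and loopless: "(v, v) \<notin> A"
    using T unfolding tournament_def by blast+
  show "(x, v) \<in> A \<or> (\<exists>w. (x, w) \<in> A \<and> (w, v) \<in> A)"
  proof (rule ccontr)
    assume "\<not> ?thesis"
    then have "insert v {w. (w, v) \<in> A} \<subseteq> {w. (w, x) \<in> A}"
      using tournament_in_neighbours_subset[OF T] x v by blast
    then have "card (insert v {w. (w, v) \<in> A}) \<le> in_degree A x"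
      unfolding in_degree_def using finite_in_neighbours[OF D] by (rule card_mono[rotated])
    moreover have "card (insert v {w. (w, v) \<in> A}) = Suc (in_degree A v)"
      unfolding in_degree_def using finite_in_neighbours[OF D] loopless by simp
    ultimately show False
      using max[of x] x by simp
  qed
qed

lemma tournament_has_king:
  assumes "tournament V A" and "V \<noteq> {}"
  shows "\<exists>v. king V A v"
proof -
  have fin: "finite (in_degree A ` V)"
    using assms(1) unfolding tournament_def digraph_def by blast
  then have "Max (in_degree A ` V) \<in> in_degree A ` V"
    using assms(2) by (intro Max_in) auto
  then obtain v where "v \<in> V" and "in_degree A v = Max (in_degree A ` V)"
    by auto
  moreover have "\<And>y. y \<in> V \<Longrightarrow> in_degree A y \<le> Max (in_degree A ` V)"
    using fin by (intro Max_ge) auto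
  ultimately show ?thesis
    using assms(1) by (metis tournament_max_in_degree_is_king)
qed

lemma king_reached_by_short_path:
  assumes D: "digraph V A" and loopless: "\<forall>u. (u, u) \<notin> A"
    and "king V A v" and x: "x \<in> V - {v}"
  shows "\<exists>xs. dpath V A xs \<and> hd xs = x \<and> last xs = v \<and> 2 \<le> length xs \<and> length xs \<le> 3"
proof -
  have sub: "A \<subseteq> V \<times> V" and v: "v \<in> V"
    using D \<open>king V A v\<close> unfolding digraph_def king_def by auto
  consider "(x, v) \<in> A" | w where "(x, w) \<in> A" "(w, v) \<in> A"
    using \<open>king V A v\<close> x unfolding king_def by blast
  then show ?thesis
  proof cases
    case 1
    then have "dpath V A [x, v]"
      using x v unfolding dpath_def by (auto simp: less_Suc_eq)
    then show ?thesis by (intro exI[of _ "[x, v]"]) simp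
  next
    case (2 w)
    then have "w \<noteq> x" "w \<noteq> v" "w \<in> V"
      using loopless sub by auto
    with 2 have "dpath V A [x, w, v]"
      using x v unfolding dpath_def by (auto simp: less_Suc_eq)
    then show ?thesis by (intro exI[of _ "[x, w, v]"]) simp
  qed
qed

lemma king_singleton_is_kH_kernel:
  assumes "digraph V A" and "\<forall>u. (u, u) \<notin> A" and "king V A v" and "k \<ge> 3"
  shows "kH_kernel k V A AH \<rho> {v}"
proof -
  have "\<exists>xs. dpath V A xs \<and> hd xs = x \<and> last xs \<in> {v} \<and> H_length AH \<rho> xs \<le> k - 1"
    if x: "x \<in> V - {v}" for x
  proof -
    obtain xs where xs: "dpath V A xs" "hd xs = x" "last xs = v"
      and len: "2 \<le> length xs" "length xs \<le> 3"
      using king_reached_by_short_path[OF assms(1-3) x] by blast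
    have "H_length AH \<rho> xs \<le> k - 1"
      using H_length_less_length[OF len(1), of AH \<rho>] len(2) assms(4) by linarith
    with xs show ?thesis by blast
  qed
  moreover have "v \<in> V"
    using assms(3) unfolding king_def by blast
  ultimately show ?thesis
    unfolding kH_kernel_def by blast
qed

theorem corollary8:
  fixes VD :: "'a set" and AD :: "('a \<times> 'a) set"
    and VH :: "'b set" and AH :: "('b \<times> 'b) set"
    and \<rho> :: "'a \<times> 'a \<Rightarrow> 'b" and k :: nat
  assumes "digraph VH AH"
    and "tournament VD AD"
    and "H_coloring AD VH \<rho>"
    and "k \<ge> 3"
  shows "\<exists>S. kH_kernel k VD AD AH \<rho> S"
proof (cases "VD = {}")
  case True
  then have "kH_kernel k VD AD AH \<rho> {}"
    unfolding kH_kernel_def by blast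
  then show ?thesis ..
next
  case False
  then obtain v where "king VD AD v"
    using tournament_has_king[OF assms(2)] by blast
  moreover have "digraph VD AD" and "\<forall>u. (u, u) \<notin> AD"
    using assms(2) unfolding tournament_def by blast+
  ultimately show ?thesis
    using king_singleton_is_kH_kernel assms(4) by metis
qed

end
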